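(* Let $(X,d)$ be an ultrametric space and $f:X\to X$ continuous. If any one of the following holds, then $f$ has the finite shadowing property: (i) $f$ is eventually $1$-Lipschitz; (ii) $f$ is invertible and $f^{-1}$ is eventually $1$-Lipschitz; (iii) $f$ is an invertible eventual similarity and $f^{-1}$ is uniformly continuous.
   Context: An ultrametric space satisfies $d(x,z)\le\max\{d(x,y),d(y,z)\}$. A map $g$ is eventually $1$-Lipschitz if there is $\varepsilon>0$ with $d(g(x),g(y))\le d(x,y)$ whenever $d(x,y)<\varepsilon$. $f$ is an eventual similarity if there are $\varepsilon>0$, $s>0$ with $d(f(x),f(y))=s\,d(x,y)$ whenever $d(x,y)<\varepsilon$. Finite shadowing property: for every $\varepsilon>0$ there is $\delta>0$ such that every finite sequence $(x_i)_{i=0}^k$ with $d(f(x_i),x_{i+1})<\delta$ for $0\le i<k$ admits $z$ with $d(f^i(z),x_i)<\varepsilon$ for $0\le i\le k$. *)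

theory Defs
  imports "HOL-Analysis.Analysis"
begin

definition ultrametric_space :: "'a::metric_space itself \<Rightarrow> bool" where
  "ultrametric_space TYPE('a) \<longleftrightarrow>
     (\<forall>x y z :: 'a. dist x z \<le> max (dist x y) (dist y z))"

definition eventually_1_lipschitz :: "('a::metric_space \<Rightarrow> 'b::metric_space) \<Rightarrow> bool" where
  "eventually_1_lipschitz g \<longleftrightarrow>
     (\<exists>\<epsilon>>0. \<forall>x y. dist x y < \<epsilon> \<longrightarrow> dist (g x) (g y) \<le> dist x y)"

definition eventual_similarity :: "('a::metric_space \<Rightarrow> 'b::metric_space) \<Rightarrow> bool" where
  "eventual_similarity f \<longleftrightarrow>
     (\<exists>\<epsilon>>0. \<exists>s>0. \<forall>x y. dist x y < \<epsilon> \<longrightarrow> dist (f x) (f y) = s * dist x y)"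

definition finite_shadowing :: "('a::metric_space \<Rightarrow> 'a) \<Rightarrow> bool" where
  "finite_shadowing f \<longleftrightarrow>
     (\<forall>\<epsilon>>0. \<exists>\<delta>>0. \<forall>(k::nat) (x::nat \<Rightarrow> 'a).
        (\<forall>i<k. dist (f (x i)) (x (Suc i)) < \<delta>) \<longrightarrow>
        (\<exists>z. \<forall>i\<le>k. dist ((f ^^ i) z) (x i) < \<epsilon>))"

end

theory Submission
  imports Defs
begin

text \<open>In an ultrametric space errors do not accumulate: two points each closer than \<open>\<delta>\<close> to a
  third are closer than \<open>\<delta>\<close> to each other, and a map that is 1-Lipschitz below scale \<open>\<eta>\<close>
  keeps \<open>\<delta>\<close>-close points \<open>\<delta>\<close>-close for every \<open>\<delta> \<le> \<eta>\<close>. Hence a \<open>\<delta>\<close>-pseudo-orbit is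
  \<open>\<delta>\<close>-shadowed by the orbit of its first point in case (i), and by the backward orbit of its
  last point in case (ii). An eventual similarity of ratio \<open>s \<le> 1\<close> is eventually 1-Lipschitz;
  if \<open>s > 1\<close>, uniform continuity of \<open>f\<^sup>-\<^sup>1\<close> makes \<open>f\<^sup>-\<^sup>1\<close> an eventual similarity of ratio
  \<open>1/s < 1\<close>, which is case (ii).\<close>

lemma ultrametric_dist_less:
  fixes x y z :: "'a::metric_space"
  assumes "ultrametric_space TYPE('a)" and "dist x y < r" and "dist y z < r"
  shows "dist x z < r"
  using assms unfolding ultrametric_space_def by (metis max_less_iff_conj order_le_less_trans)

lemma eventually_1_lipschitzE:
  assumes "eventually_1_lipschitz g"
  obtains \<eta> where "\<eta> > 0"
    and "\<And>\<delta> x y. \<delta> \<le> \<eta> \<Longrightarrow> dist x y < \<delta> \<Longrightarrow> dist (g x) (g y) < \<delta>"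
proof -
  obtain \<eta> where "\<eta> > 0" and lip: "\<And>x y. dist x y < \<eta> \<Longrightarrow> dist (g x) (g y) \<le> dist x y"
    using assms unfolding eventually_1_lipschitz_def by blast
  have "dist (g x) (g y) < \<delta>" if "\<delta> \<le> \<eta>" "dist x y < \<delta>" for \<delta> x y
    using lip[of x y] that by linarith
  with \<open>\<eta> > 0\<close> show thesis by (rule that)
qed

lemma finite_shadowingI:
  fixes f :: "'a::metric_space \<Rightarrow> 'a"
  assumes "\<eta> > 0"
    and shadow: "\<And>\<delta> k x. 0 < \<delta> \<Longrightarrow> \<delta> \<le> \<eta> \<Longrightarrow> \<forall>i<k. dist (f (x i)) (x (Suc i)) < \<delta> \<Longrightarrow>
      \<exists>z. \<forall>i\<le>k. dist ((f ^^ i) z) (x i) < \<delta>"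
  shows "finite_shadowing f"
  unfolding finite_shadowing_def
proof (intro allI impI)
  fix \<epsilon> :: real
  assume "\<epsilon> > 0"
  define \<delta> where "\<delta> = min \<epsilon> \<eta>"
  have "0 < \<delta>" "\<delta> \<le> \<eta>" "\<delta> \<le> \<epsilon>"
    using \<open>\<epsilon> > 0\<close> \<open>\<eta> > 0\<close> by (simp_all add: \<delta>_def)
  have "\<exists>z. \<forall>i\<le>k. dist ((f ^^ i) z) (x i) < \<epsilon>"
    if pseudo: "\<forall>i<k. dist (f (x i)) (x (Suc i)) < \<delta>" for k x
  proof -
    obtain z where "\<forall>i\<le>k. dist ((f ^^ i) z) (x i) < \<delta>"
      using shadow[OF \<open>0 < \<delta>\<close> \<open>\<delta> \<le> \<eta>\<close> pseudo] by blast
    with \<open>\<delta> \<le> \<epsilon>\<close> show ?thesis by (meson order_less_le_trans)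
  qed
  with \<open>0 < \<delta>\<close> show "\<exists>\<delta>>0. \<forall>k x. (\<forall>i<k. dist (f (x i)) (x (Suc i)) < \<delta>) \<longrightarrow>
      (\<exists>z. \<forall>i\<le>k. dist ((f ^^ i) z) (x i) < \<epsilon>)"
    by blast
qed

lemma finite_shadowing_if_eventually_1_lipschitz:
  fixes f :: "'a::metric_space \<Rightarrow> 'a"
  assumes ultra: "ultrametric_space TYPE('a)" and "eventually_1_lipschitz f"
  shows "finite_shadowing f"
proof -
  obtain \<eta> where "\<eta> > 0"
    and small: "\<And>\<delta> x y. \<delta> \<le> \<eta> \<Longrightarrow> dist x y < \<delta> \<Longrightarrow> dist (f x) (f y) < \<delta>"
    using eventually_1_lipschitzE[OF assms(2)] by blast
  have "\<exists>z. \<forall>i\<le>k. dist ((f ^^ i) z) (x i) < \<delta>"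
    if "0 < \<delta>" "\<delta> \<le> \<eta>" and pseudo: "\<forall>i<k. dist (f (x i)) (x (Suc i)) < \<delta>" for \<delta> k x
  proof (intro exI allI impI)
    fix i
    show "i \<le> k \<Longrightarrow> dist ((f ^^ i) (x 0)) (x i) < \<delta>"
    proof (induction i)
      case 0
      then show ?case using \<open>0 < \<delta>\<close> by simp
    next
      case (Suc i)
      then have "dist ((f ^^ i) (x 0)) (x i) < \<delta>" by simp
      then have "dist (f ((f ^^ i) (x 0))) (f (x i)) < \<delta>" by (rule small[OF \<open>\<delta> \<le> \<eta>\<close>])
      moreover have "dist (f (x i)) (x (Suc i)) < \<delta>" using pseudo Suc.prems by simp
      ultimately have "dist (f ((f ^^ i) (x 0))) (x (Suc i)) < \<delta>" by (rule ultrametric_dist_less[OF ultra])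
      then show ?case by simp
    qed
  qed
  with \<open>\<eta> > 0\<close> show ?thesis by (rule finite_shadowingI)
qed

lemma finite_shadowing_if_inv_eventually_1_lipschitz:
  fixes f :: "'a::metric_space \<Rightarrow> 'a"
  assumes ultra: "ultrametric_space TYPE('a)" and "bij f" and "eventually_1_lipschitz (inv f)"
  shows "finite_shadowing f"
proof -
  obtain \<eta> where "\<eta> > 0"
    and small: "\<And>\<delta> x y. \<delta> \<le> \<eta> \<Longrightarrow> dist x y < \<delta> \<Longrightarrow> dist (inv f x) (inv f y) < \<delta>"
    using eventually_1_lipschitzE[OF assms(3)] by blast
  have "\<exists>z. \<forall>i\<le>k. dist ((f ^^ i) z) (x i) < \<delta>"
    if "0 < \<delta>" "\<delta> \<le> \<eta>" and "\<forall>i<k. dist (f (x i)) (x (Suc i)) < \<delta>" for \<delta> k x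
    using that(3)
  proof (induction k arbitrary: x)
    case 0
    then show ?case using \<open>0 < \<delta>\<close> by (auto intro!: exI[of _ "x 0"])
  next
    case (Suc k)
    obtain z where z: "\<forall>i\<le>k. dist ((f ^^ i) z) (x (Suc i)) < \<delta>"
      using Suc.IH[of "\<lambda>i. x (Suc i)"] Suc.prems by auto
    have "dist z (x 1) < \<delta>" using z[rule_format, of 0] by simp
    moreover have "dist (x 1) (f (x 0)) < \<delta>" using Suc.prems by (simp add: dist_commute)
    ultimately have "dist z (f (x 0)) < \<delta>" by (rule ultrametric_dist_less[OF ultra])
    then have "dist (inv f z) (inv f (f (x 0))) < \<delta>" by (rule small[OF \<open>\<delta> \<le> \<eta>\<close>])
    then have start: "dist (inv f z) (x 0) < \<delta>" by (simp add: bij_is_inj[OF \<open>bij f\<close>])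
    have shift: "(f ^^ Suc j) (inv f z) = (f ^^ j) z" for j
      by (simp only: funpow_Suc_right comp_apply surj_f_inv_f[OF bij_is_surj[OF \<open>bij f\<close>]])
    have "dist ((f ^^ i) (inv f z)) (x i) < \<delta>" if "i \<le> Suc k" for i
    proof (cases i)
      case 0
      then show ?thesis using start by simp
    next
      case (Suc j)
      then show ?thesis using shift z that by simp
    qed
    then show ?case by blast
  qed
  with \<open>\<eta> > 0\<close> show ?thesis by (rule finite_shadowingI)
qed

lemma eventual_similarity_imp_eventually_1_lipschitz_or_inv:
  fixes f :: "'a::metric_space \<Rightarrow> 'b::metric_space"
  assumes "surj f" and "eventual_similarity f" and "uniformly_continuous_on UNIV (inv f)"
  shows "eventually_1_lipschitz f \<or> eventually_1_lipschitz (inv f)"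
proof -
  obtain \<epsilon> s where "\<epsilon> > 0" "s > 0"
    and sim: "\<And>x y. dist x y < \<epsilon> \<Longrightarrow> dist (f x) (f y) = s * dist x y"
    using assms(2) unfolding eventual_similarity_def by blast
  show ?thesis
  proof (cases "s \<le> 1")
    case True
    have "dist (f x) (f y) \<le> dist x y" if "dist x y < \<epsilon>" for x y
      using sim[OF that] mult_right_mono[OF True, of "dist x y"] by simp
    with \<open>\<epsilon> > 0\<close> show ?thesis unfolding eventually_1_lipschitz_def by blast
  next
    case False
    obtain d where "d > 0" and unif: "\<And>x y. dist x y < d \<Longrightarrow> dist (inv f x) (inv f y) < \<epsilon>"
      using assms(3) \<open>\<epsilon> > 0\<close> unfolding uniformly_continuous_on_def by (metis UNIV_I)
    have "dist (inv f x) (inv f y) \<le> dist x y" if "dist x y < d" for x y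
    proof -
      have "dist x y = s * dist (inv f x) (inv f y)"
        using sim[OF unif[OF that]] surj_f_inv_f[OF assms(1)] by simp
      then show ?thesis using False by (simp add: mult_le_cancel_right1)
    qed
    with \<open>d > 0\<close> show ?thesis unfolding eventually_1_lipschitz_def by blast
  qed
qed

theorem theorem5p2:
  fixes f :: "'a::metric_space \<Rightarrow> 'a"
  assumes "ultrametric_space TYPE('a)"
    and "continuous_on UNIV f"
    and "eventually_1_lipschitz f
         \<or> (bij f \<and> eventually_1_lipschitz (inv f))
         \<or> (bij f \<and> eventual_similarity f \<and> uniformly_continuous_on UNIV (inv f))"
  shows "finite_shadowing f"
  using assms(3) eventual_similarity_imp_eventually_1_lipschitz_or_inv[OF bij_is_surj]
    finite_shadowing_if_eventually_1_lipschitz[OF assms(1)]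
    finite_shadowing_if_inv_eventually_1_lipschitz[OF assms(1)]
  by blast

end
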